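(* Let $G$ be a finite graph with maximum degree $\Delta$ and average degree $d\geq \Delta^{3/4}$. Then $G$ contains a $C_4$-free subgraph with average degree at least $d\cdot \Delta^{-3/4}/4$.
   Context: Average degree of $G$ is $2e(G)/|V(G)|$. A graph is $C_4$-free if it contains no $4$-cycle as a subgraph. *)

theory Defs
  imports Complex_Main
begin

definition graph :: "'a set \<Rightarrow> 'a set set \<Rightarrow> bool" where
  "graph V E \<longleftrightarrow> finite V \<and> (\<forall>e\<in>E. e \<subseteq> V \<and> card e = 2)"

definition degree :: "'a set set \<Rightarrow> 'a \<Rightarrow> nat" where
  "degree E v = card {e \<in> E. v \<in> e}"

definition max_degree :: "'a set \<Rightarrow> 'a set set \<Rightarrow> nat" where
  "max_degree V E = Max (degree E ` V)"

definition avg_degree :: "'a set \<Rightarrow> 'a set set \<Rightarrow> real" where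
  "avg_degree V E = 2 * real (card E) / real (card V)"

definition subgraph :: "'a set \<Rightarrow> 'a set set \<Rightarrow> 'a set \<Rightarrow> 'a set set \<Rightarrow> bool" where
  "subgraph V' E' V E \<longleftrightarrow> V' \<subseteq> V \<and> E' \<subseteq> E \<and> (\<forall>e\<in>E'. e \<subseteq> V')"

definition C4_free :: "'a set set \<Rightarrow> bool" where
  "C4_free E \<longleftrightarrow> \<not> (\<exists>a b c d. distinct [a, b, c, d] \<and>
      {a, b} \<in> E \<and> {b, c} \<in> E \<and> {c, d} \<in> E \<and> {d, a} \<in> E)"

end

theory Submission
  imports Defs
begin

text \<open>Put D = \<lceil>\<Delta>^(1/4)\<rceil> and take a maximal C4-free subgraph H of E with maximum degree at
  most D. An edge of E outside H either meets a vertex of degree D in H, or joins the ends of a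
  path u x y v in H. There are at most 2|H|/D vertices of degree D, each meeting at most
  \<Delta> - D edges outside H, and H has at most 2|H|(D - 1)^2 such paths. Hence
  D|E| \<le> |H|(2\<Delta> - D + 2D(D - 1)^2) \<le> 4 D \<Delta>^(3/4) |H|.\<close>

lemma graph_mono: "graph V E \<Longrightarrow> H \<subseteq> E \<Longrightarrow> graph V H"
  unfolding graph_def by blast

lemma graph_finite_edges: "graph V E \<Longrightarrow> finite E"
  unfolding graph_def by (meson PowI finite_Pow_iff finite_subset subsetI)

lemma sum_degree_eq_twice_card_edges:
  assumes "graph V E"
  shows "(\<Sum>v\<in>V. degree E v) = 2 * card E"
proof -
  have fin: "finite V" "finite E" using assms graph_finite_edges unfolding graph_def by auto
  have "(\<Sum>v\<in>V. degree E v) = (\<Sum>v\<in>V. \<Sum>e\<in>{e \<in> E. v \<in> e}. 1)"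
    unfolding degree_def by simp
  also have "\<dots> = (\<Sum>e\<in>E. \<Sum>v\<in>{v \<in> V. v \<in> e}. 1)"
    using fin by (rule sum.swap_restrict)
  also have "\<dots> = (\<Sum>e\<in>E. 2)"
  proof (rule sum.cong)
    fix e assume "e \<in> E"
    with assms have "{v \<in> V. v \<in> e} = e" "card e = 2" unfolding graph_def by auto
    then show "(\<Sum>v\<in>{v \<in> V. v \<in> e}. 1 :: nat) = 2" by simp
  qed simp
  finally show ?thesis by simp
qed

definition neighbours :: "'a set set \<Rightarrow> 'a \<Rightarrow> 'a set" where
  "neighbours E x = {u. {x, u} \<in> E}"

lemma neighbours_subset: "graph V E \<Longrightarrow> neighbours E x \<subseteq> V"
  unfolding graph_def neighbours_def by blast

lemma card_neighbours:
  assumes "graph V E"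
  shows "card (neighbours E x) = degree E x"
proof -
  have edge: "\<And>e. e \<in> E \<Longrightarrow> \<exists>a b. e = {a, b} \<and> a \<noteq> b"
    using assms unfolding graph_def by (auto simp: card_2_iff)
  have "bij_betw (\<lambda>u. {x, u}) (neighbours E x) {e \<in> E. x \<in> e}"
  proof (rule bij_betw_imageI)
    have "x \<notin> neighbours E x" using edge unfolding neighbours_def by fastforce
    then show "inj_on (\<lambda>u. {x, u}) (neighbours E x)"
      by (auto simp: inj_on_def doubleton_eq_iff)
    show "(\<lambda>u. {x, u}) ` neighbours E x = {e \<in> E. x \<in> e}"
      unfolding neighbours_def using edge by (fastforce simp: insert_commute)
  qed
  then show ?thesis unfolding degree_def by (rule bij_betw_same_card)
qed

lemma degree_insert:
  assumes "e \<notin> E" "finite E"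
  shows "degree (insert e E) v = (if v \<in> e then Suc (degree E v) else degree E v)"
proof -
  have "{f \<in> insert e E. v \<in> f} = (if v \<in> e then insert e {f \<in> E. v \<in> f} else {f \<in> E. v \<in> f})"
    by auto
  then show ?thesis unfolding degree_def using assms by auto
qed

definition C4_closing_edges :: "'a set set \<Rightarrow> 'a set set" where
  "C4_closing_edges E = {{u, v} | u x y v. distinct [u, x, y, v] \<and> {u, x} \<in> E \<and> {x, y} \<in> E \<and> {y, v} \<in> E}"

lemma C4_free_insert:
  assumes "C4_free E" "e \<notin> C4_closing_edges E"
  shows "C4_free (insert e E)"
  unfolding C4_free_def
proof clarify
  fix a b c d
  assume cycle: "distinct [a, b, c, d]" "{a, b} \<in> insert e E" "{b, c} \<in> insert e E"
    "{c, d} \<in> insert e E" "{d, a} \<in> insert e E"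
  have closing: "{v, u} \<in> C4_closing_edges E"
    if "distinct [u, x, y, v]" "{u, x} \<in> E" "{x, y} \<in> E" "{y, v} \<in> E" for u x y v
  proof -
    have "{u, v} \<in> C4_closing_edges E" using that unfolding C4_closing_edges_def by blast
    then show ?thesis by (simp only: insert_commute)
  qed
  have "\<not> ({a, b} \<in> E \<and> {b, c} \<in> E \<and> {c, d} \<in> E \<and> {d, a} \<in> E)"
    using assms(1) cycle(1) unfolding C4_free_def by blast
  then have "e = {a, b} \<or> e = {b, c} \<or> e = {c, d} \<or> e = {d, a}"
    using cycle(2-5) by auto
  moreover have distinct_edges: "{a, b} \<noteq> {b, c}" "{a, b} \<noteq> {c, d}" "{a, b} \<noteq> {d, a}"
    "{b, c} \<noteq> {c, d}" "{b, c} \<noteq> {d, a}" "{c, d} \<noteq> {d, a}"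
    using cycle(1) by (auto simp: doubleton_eq_iff)
  ultimately have "e \<in> C4_closing_edges E"
  proof (elim disjE)
    assume e: "e = {a, b}"
    with cycle(2-5) distinct_edges have "{b, c} \<in> E" "{c, d} \<in> E" "{d, a} \<in> E" by auto
    with closing[of b c d a] cycle(1) e show ?thesis by auto
  next
    assume e: "e = {b, c}"
    with cycle(2-5) distinct_edges have "{c, d} \<in> E" "{d, a} \<in> E" "{a, b} \<in> E" by auto
    with closing[of c d a b] cycle(1) e show ?thesis by auto
  next
    assume e: "e = {c, d}"
    with cycle(2-5) distinct_edges have "{d, a} \<in> E" "{a, b} \<in> E" "{b, c} \<in> E" by auto
    with closing[of d a b c] cycle(1) e show ?thesis by auto
  next
    assume e: "e = {d, a}"
    with cycle(2-5) distinct_edges have "{a, b} \<in> E" "{b, c} \<in> E" "{c, d} \<in> E" by auto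
    with closing[of a b c d] cycle(1) e show ?thesis by auto
  qed
  with assms(2) show False ..
qed

lemma finite_C4_closing_edges: "graph V E \<Longrightarrow> finite (C4_closing_edges E)"
proof -
  assume "graph V E"
  then have "C4_closing_edges E \<subseteq> Pow V" "finite V"
    unfolding graph_def C4_closing_edges_def by blast+
  then show ?thesis by (simp add: finite_subset)
qed

lemma exists_maximal_C4_free_subgraph:
  assumes "finite E"
  obtains H where "H \<subseteq> E" "C4_free H" "\<And>v. degree H v \<le> D"
    "\<And>e. e \<in> E - H \<Longrightarrow> e \<in> C4_closing_edges H \<or> (\<exists>w\<in>e. degree H w = D)"
proof -
  define admissible where
    "admissible H \<longleftrightarrow> H \<subseteq> E \<and> C4_free H \<and> (\<forall>v. degree H v \<le> D)" for H
  have "admissible {}" unfolding admissible_def C4_free_def degree_def by auto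
  moreover have "\<forall>H. admissible H \<longrightarrow> card H < Suc (card E)"
    unfolding admissible_def using assms by (simp add: card_mono less_Suc_eq_le)
  ultimately obtain H where "admissible H" and max: "\<And>H'. admissible H' \<Longrightarrow> card H' \<le> card H"
    using ex_has_greatest_nat[of admissible "{}" card] by blast
  then have H: "H \<subseteq> E" "C4_free H" "\<And>v. degree H v \<le> D" unfolding admissible_def by auto
  have "finite H" using H(1) assms finite_subset by blast
  have "e \<in> C4_closing_edges H \<or> (\<exists>w\<in>e. degree H w = D)" if e: "e \<in> E - H" for e
  proof (rule ccontr)
    assume "\<not> ?thesis"
    then have "e \<notin> C4_closing_edges H" and unsaturated: "\<forall>w\<in>e. degree H w \<noteq> D" by auto
    then have "C4_free (insert e H)" using C4_free_insert[OF H(2)] by blast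
    moreover have "degree (insert e H) v \<le> D" for v
      using H(3)[of v] unsaturated degree_insert[of e H v] e \<open>finite H\<close> by auto
    ultimately have "admissible (insert e H)" using e H(1) unfolding admissible_def by auto
    then show False using max[of "insert e H"] e \<open>finite H\<close> by simp
  qed
  with H show thesis using that by blast
qed

lemma degree_Diff:
  assumes "finite E" "H \<subseteq> E"
  shows "degree (E - H) v = degree E v - degree H v"
proof -
  have "{e \<in> E - H. v \<in> e} = {e \<in> E. v \<in> e} - {e \<in> H. v \<in> e}" by blast
  moreover have "{e \<in> H. v \<in> e} \<subseteq> {e \<in> E. v \<in> e}" using assms(2) by blast
  ultimately show ?thesis
    unfolding degree_def using assms(1) by (simp add: card_Diff_subset finite_subset)
qed

lemma card_edges_at_saturated_le:
  assumes "graph V E" "H \<subseteq> E" "\<forall>v\<in>V. degree E v \<le> \<Delta>"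
  shows "D * card {e \<in> E - H. \<exists>w\<in>e. degree H w = D} \<le> 2 * card H * (\<Delta> - D)"
proof -
  define S where "S = {w \<in> V. degree H w = D}"
  have "finite V" "finite E" using assms(1) graph_finite_edges unfolding graph_def by auto
  have "card S * D = (\<Sum>w\<in>S. degree H w)" unfolding S_def by simp
  also have "\<dots> \<le> (\<Sum>w\<in>V. degree H w)"
    using \<open>finite V\<close> unfolding S_def by (intro sum_mono2) auto
  also have "\<dots> = 2 * card H"
    using sum_degree_eq_twice_card_edges[OF graph_mono[OF assms(1,2)]] .
  finally have S_le: "card S * D \<le> 2 * card H" .
  have "{e \<in> E - H. \<exists>w\<in>e. degree H w = D} = (\<Union>w\<in>S. {e \<in> E - H. w \<in> e})"
    using assms(1) unfolding S_def graph_def by blast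
  then have "card {e \<in> E - H. \<exists>w\<in>e. degree H w = D} \<le> (\<Sum>w\<in>S. degree (E - H) w)"
    unfolding degree_def using \<open>finite V\<close> S_def by (simp add: card_UN_le)
  also have "\<dots> \<le> (\<Sum>w\<in>S. \<Delta> - D)"
    using assms(3) degree_Diff[OF \<open>finite E\<close> assms(2)] unfolding S_def
    by (intro sum_mono) (simp add: diff_le_mono)
  finally have "D * card {e \<in> E - H. \<exists>w\<in>e. degree H w = D} \<le> card S * D * (\<Delta> - D)"
    by (simp add: mult.commute mult.left_commute)
  also have "\<dots> \<le> 2 * card H * (\<Delta> - D)" using S_le by (rule mult_le_mono1)
  finally show ?thesis .
qed

lemma card_arcs:
  assumes "graph V E"
  shows "card (SIGMA x:V. neighbours E x) = 2 * card E"
proof -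
  have "finite V" using assms unfolding graph_def by blast
  then have "card (SIGMA x:V. neighbours E x) = (\<Sum>x\<in>V. card (neighbours E x))"
    using neighbours_subset[OF assms] by (intro card_SigmaI) (auto intro: finite_subset)
  also have "\<dots> = (\<Sum>x\<in>V. degree E x)" using card_neighbours[OF assms] by simp
  finally show ?thesis using sum_degree_eq_twice_card_edges[OF assms] by simp
qed

lemma card_C4_closing_edges_le:
  assumes "graph V E" "\<forall>v\<in>V. degree E v \<le> D"
  shows "card (C4_closing_edges E) \<le> 2 * card E * (D - 1)\<^sup>2"
proof -
  define arcs where "arcs = (SIGMA x:V. neighbours E x)"
  \<comment> \<open>The path u x y v is indexed by its middle arc (x, y)\<close>
  define paths where
    "paths = Sigma arcs (\<lambda>(x, y). (neighbours E x - {y}) \<times> (neighbours E y - {x}))"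
  have "finite V" using assms(1) unfolding graph_def by blast
  then have fin_neighbours: "finite (neighbours E x)" for x
    using neighbours_subset[OF assms(1)] by (rule finite_subset[rotated])
  have "finite arcs" unfolding arcs_def using \<open>finite V\<close> fin_neighbours by blast
  have "C4_closing_edges E \<subseteq> (\<lambda>((x, y), (u, v)). {u, v}) ` paths"
  proof
    fix e assume "e \<in> C4_closing_edges E"
    then obtain u x y v where "e = {u, v}" "distinct [u, x, y, v]"
      "{u, x} \<in> E" "{x, y} \<in> E" "{y, v} \<in> E"
      unfolding C4_closing_edges_def by blast
    moreover have "x \<in> V" using neighbours_subset[OF assms(1), of y] \<open>{x, y} \<in> E\<close>
      unfolding neighbours_def by (auto simp: insert_commute)
    ultimately have "((x, y), (u, v)) \<in> paths"
      unfolding paths_def arcs_def neighbours_def by (auto simp: insert_commute)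
    then show "e \<in> (\<lambda>((x, y), (u, v)). {u, v}) ` paths" using \<open>e = {u, v}\<close> by force
  qed
  moreover have "finite paths"
    unfolding paths_def using \<open>finite arcs\<close> fin_neighbours by (auto split: prod.splits)
  ultimately have "card (C4_closing_edges E) \<le> card ((\<lambda>((x, y), (u, v)). {u, v}) ` paths)"
    by (intro card_mono finite_imageI)
  also have "\<dots> \<le> card paths" using \<open>finite paths\<close> by (rule card_image_le)
  also have "card paths = (\<Sum>(x, y)\<in>arcs. card (neighbours E x - {y}) * card (neighbours E y - {x}))"
    unfolding paths_def using \<open>finite arcs\<close> fin_neighbours
    by (subst card_SigmaI) (auto simp: card_cartesian_product split: prod.splits intro!: sum.cong)
  also have "\<dots> \<le> (\<Sum>(x, y)\<in>arcs. (D - 1)\<^sup>2)"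
  proof (intro sum_mono, clarify)
    fix x y assume "(x, y) \<in> arcs"
    then have "x \<in> V" "y \<in> neighbours E x" "x \<in> neighbours E y"
      unfolding arcs_def neighbours_def by (auto simp: insert_commute)
    moreover have "y \<in> V" using neighbours_subset[OF assms(1)] \<open>y \<in> neighbours E x\<close> by blast
    ultimately have "card (neighbours E x - {y}) \<le> D - 1" "card (neighbours E y - {x}) \<le> D - 1"
      using assms(2) card_neighbours[OF assms(1)] fin_neighbours by (auto simp: diff_le_mono)
    then show "card (neighbours E x - {y}) * card (neighbours E y - {x}) \<le> (D - 1)\<^sup>2"
      by (simp add: power2_eq_square mult_le_mono)
  qed
  also have "\<dots> = 2 * card E * (D - 1)\<^sup>2"
    using card_arcs[OF assms(1)] unfolding arcs_def by simp
  finally show ?thesis .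
qed

lemma exists_C4_free_subgraph_card_ge:
  assumes "graph V E" "D \<le> \<Delta>" "\<forall>v\<in>V. degree E v \<le> \<Delta>"
  obtains H where "H \<subseteq> E" "C4_free H" "D * card E \<le> card H * (2 * \<Delta> - D + 2 * D * (D - 1)\<^sup>2)"
proof -
  obtain H where H: "H \<subseteq> E" "C4_free H" "\<And>v. degree H v \<le> D"
    and maximal: "\<And>e. e \<in> E - H \<Longrightarrow> e \<in> C4_closing_edges H \<or> (\<exists>w\<in>e. degree H w = D)"
    using exists_maximal_C4_free_subgraph[OF graph_finite_edges[OF assms(1)]] by blast
  have graph_H: "graph V H" using graph_mono[OF assms(1) H(1)] .
  define B where "B = {e \<in> E - H. \<exists>w\<in>e. degree H w = D}"
  define C where "C = C4_closing_edges H"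
  have "finite (H \<union> B \<union> C)"
    using graph_finite_edges[OF assms(1)] finite_C4_closing_edges[OF graph_H] H(1)
    unfolding B_def C_def by (auto intro: finite_subset)
  moreover have "E \<subseteq> H \<union> B \<union> C" using maximal unfolding B_def C_def by blast
  ultimately have "card E \<le> card (H \<union> B \<union> C)" by (rule card_mono)
  also have "\<dots> \<le> card H + card B + card C" by (meson card_Un_le add_right_mono order_trans)
  finally have "D * card E \<le> D * card H + D * card B + D * card C"
    by (metis add_mult_distrib2 mult_le_mono2)
  also have "\<dots> \<le> D * card H + 2 * card H * (\<Delta> - D) + D * (2 * card H * (D - 1)\<^sup>2)"
    using card_edges_at_saturated_le[OF assms(1) H(1) assms(3), of D]
      card_C4_closing_edges_le[OF graph_H] H(3)
    unfolding B_def C_def by (intro add_mono) auto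
  also have "\<dots> = card H * (2 * \<Delta> - D + 2 * D * (D - 1)\<^sup>2)"
    using assms(2) by (simp add: algebra_simps)
  finally show thesis using H(1,2) that by blast
qed

lemma fourth_root_ceiling_bound:
  fixes r :: real and D \<Delta> :: nat
  assumes "1 \<le> r" "r \<le> D" "D < r + 1" "r ^ 4 = \<Delta>" "D \<le> \<Delta>"
  shows "real (2 * \<Delta> - D + 2 * D * (D - 1)\<^sup>2) \<le> 4 * D * r ^ 3"
proof -
  have "1 \<le> D" using assms(1,2) by linarith
  then have "(real D - 1)\<^sup>2 \<le> r\<^sup>2" using assms(3) by (intro power_mono) auto
  also have "\<dots> \<le> r ^ 3" using assms(1) by (intro power_increasing) simp_all
  finally have square: "2 * D * (real D - 1)\<^sup>2 \<le> 2 * D * r ^ 3" by (simp add: mult_left_mono)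
  have "r ^ 4 = r * r ^ 3" by (simp add: eval_nat_numeral)
  also have "\<dots> \<le> D * r ^ 3" using assms(1,2) by (intro mult_right_mono) auto
  finally have quartic: "r ^ 4 \<le> D * r ^ 3" .
  have "real (2 * \<Delta> - D + 2 * D * (D - 1)\<^sup>2) = 2 * real \<Delta> - D + 2 * D * (real D - 1)\<^sup>2"
    using assms(5) \<open>1 \<le> D\<close> by (simp add: of_nat_diff)
  then show ?thesis using square quartic assms(4) by linarith
qed

lemma exists_C4_free_subgraph_card_ge_powr:
  fixes \<Delta> :: nat
  assumes "graph V E" "\<forall>v\<in>V. degree E v \<le> \<Delta>"
  obtains H where "H \<subseteq> E" "C4_free H" "card E \<le> 4 * real \<Delta> powr (3/4) * card H"
proof (cases "\<Delta> = 0")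
  case True
  have "E = {}"
  proof
    show "E \<subseteq> {}"
    proof
      fix e assume "e \<in> E"
      with assms(1) obtain v where "v \<in> e" "v \<in> V" unfolding graph_def by (fastforce simp: card_2_iff)
      with \<open>e \<in> E\<close> graph_finite_edges[OF assms(1)] have "degree E v \<noteq> 0"
        unfolding degree_def by auto
      with assms(2) \<open>v \<in> V\<close> True show "e \<in> {}" by auto
    qed
  qed simp
  then show thesis using that[of "{}"] by (simp add: C4_free_def)
next
  case False
  define r where "r = real \<Delta> powr (1/4)"
  define D where "D = nat \<lceil>r\<rceil>"
  have "1 \<le> r" unfolding r_def using False by (simp add: ge_one_powr_ge_zero)
  have r_power: "r ^ 4 = \<Delta>" "r ^ 3 = real \<Delta> powr (3/4)"
    unfolding r_def using False by (simp_all add: powr_power)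
  have D: "r \<le> D" "D < r + 1" unfolding D_def using \<open>1 \<le> r\<close> by linarith+
  have "r \<le> \<Delta>" using power_increasing[of 1 4 r] \<open>1 \<le> r\<close> r_power by simp
  then have "D \<le> \<Delta>" unfolding D_def by (simp add: ceiling_le nat_le_iff)
  obtain H where H: "H \<subseteq> E" "C4_free H"
    "D * card E \<le> card H * (2 * \<Delta> - D + 2 * D * (D - 1)\<^sup>2)"
    using exists_C4_free_subgraph_card_ge[OF assms(1) \<open>D \<le> \<Delta>\<close> assms(2)] .
  have "real (D * card E) \<le> real (card H) * real (2 * \<Delta> - D + 2 * D * (D - 1)\<^sup>2)"
    using H(3) by (metis of_nat_le_iff of_nat_mult)
  also have "\<dots> \<le> real (card H) * (4 * D * r ^ 3)"
    using fourth_root_ceiling_bound[OF \<open>1 \<le> r\<close> D r_power(1) \<open>D \<le> \<Delta>\<close>] by (rule mult_left_mono) simp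
  finally have "real D * card E \<le> real D * (4 * r ^ 3 * card H)" by (simp add: algebra_simps)
  then have "card E \<le> 4 * r ^ 3 * card H" using D \<open>1 \<le> r\<close> by simp
  then show thesis using that H(1,2) r_power(2) by simp
qed

theorem lemma10:
  fixes V :: "'a set" and E :: "'a set set"
  assumes "graph V E" and "V \<noteq> {}"
    and "avg_degree V E \<ge> real (max_degree V E) powr (3/4)"
  shows "\<exists>V' E'. subgraph V' E' V E \<and> V' \<noteq> {} \<and> C4_free E' \<and>
           avg_degree V' E' \<ge> avg_degree V E * real (max_degree V E) powr (-3/4) / 4"
proof -
  define p where "p = real (max_degree V E) powr (3/4)"
  have "finite V" using assms(1) unfolding graph_def by blast
  then have "\<forall>v\<in>V. degree E v \<le> max_degree V E" unfolding max_degree_def by simp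
  then obtain H where H: "H \<subseteq> E" "C4_free H" "card E \<le> 4 * p * card H"
    using exists_C4_free_subgraph_card_ge_powr[OF assms(1)] unfolding p_def by blast
  then have ratio: "card E / (4 * p) \<le> card H"
    by (cases "p = 0") (simp_all add: p_def pos_divide_le_eq mult_ac)
  have "real (max_degree V E) powr (-3/4) = 1 / p"
    unfolding p_def by (simp add: powr_minus_divide)
  then have "avg_degree V E * real (max_degree V E) powr (-3/4) / 4 = 2 * (card E / (4 * p)) / card V"
    unfolding avg_degree_def by simp
  also have "\<dots> \<le> 2 * real (card H) / card V"
    using ratio by (intro divide_right_mono) simp_all
  finally have "avg_degree V E * real (max_degree V E) powr (-3/4) / 4 \<le> avg_degree V H"
    unfolding avg_degree_def .
  moreover have "subgraph V H V E" using assms(1) H(1) unfolding subgraph_def graph_def by blast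
  ultimately show ?thesis using assms(2) H(2) by blast
qed

end
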